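(* For every integer $r\ge2$, $$\zeta(r)=\frac{1}{(1-2^{1-r})\,r!}\sum_{n=1}^\infty\frac{1}{2^{n+1}}\,Y_r\!\left(0!\,H_n^{(1)},1!\,H_n^{(2)},\dots,(r-1)!\,H_n^{(r)}\right),$$ the series being convergent.
   Context: $\zeta$ is the Riemann zeta function. $H_n^{(m)}=\sum_{k=1}^nk^{-m}$. Complete (exponential) Bell polynomials: $Y_0=1$ and for $r\ge1$, $Y_r(x_1,\dots,x_r)=\sum \frac{r!}{k_1!\cdots k_r!}\prod_{j=1}^r\left(\frac{x_j}{j!}\right)^{k_j}$, the sum over all tuples of nonnegative integers $(k_1,\dots,k_r)$ with $k_1+2k_2+\cdots+rk_r=r$. *)

theory Defs
  imports "HOL-Analysis.Analysis"
begin

definition zeta :: "nat \<Rightarrow> real" where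
  "zeta s = (\<Sum>n. 1 / (real (Suc n)) ^ s)"

definition harm :: "nat \<Rightarrow> nat \<Rightarrow> real" where
  "harm m n = (\<Sum>k=1..n. 1 / (real k) ^ m)"

text \<open>Complete exponential Bell polynomial Y_r(x_1,...,x_r); the argument x is a
  function with x j the j-th variable (j = 1..r). The sum ranges over all tuples
  (k_1,...,k_r) of nonnegative integers with k_1 + 2 k_2 + ... + r k_r = r; each such k_j is
  at most r, so the tuples are drawn from the finite extensional function space on {1..r} with values in {0..r}.\<close>
definition bellY :: "nat \<Rightarrow> (nat \<Rightarrow> real) \<Rightarrow> real" where
  "bellY r x = (\<Sum>k \<in> {k \<in> {1..r} \<rightarrow>\<^sub>E {0..r}. (\<Sum>j=1..r. j * k j) = r}.
      fact r / (\<Prod>j=1..r. fact (k j)) * (\<Prod>j=1..r. (x j / fact j) ^ (k j)))"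

end

theory Submission
  imports Defs "HOL-Computational_Algebra.Formal_Power_Series"
begin

(* Proof outline.  Write eta(r) = sum_{k>=1} (-1)^(k-1)/k^r = (1 - 2^(1-r)) zeta(r).

   (1) Euler's series transformation: for an absolutely summable sequence a,
       sum_k a_k = sum_m 2^-(m+1) sum_{k<=m} C(m,k) a_k; it follows from
       sum_m C(m,k)/2^(m+1) = 1 by interchanging the order of summation.
       Applied to a_k = (-1)^(k-1)/k^r it gives
       eta(r) = sum_m 2^-(m+1) A_r(m),  A_r(m) = sum_{j=1..m} (-1)^(j-1) C(m,j)/j^r.

   (2) A_N(n) is the coefficient of x^N in H_n(x) = prod_{k=1..n} 1/(1 - x/k):
       both satisfy the same recursion in n and N.

   (3) Y_r(x_1,...,x_r)/r! is the coefficient of x^r in prod_{j=1..r} exp(x_j t^j/j!).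
       With x_j = (j-1)! H_n^(j) this product and H_n(x) solve the differential
       equations F' = (sum_j H_n^(j) x^(j-1)) F and H_n' = (sum_k 1/(k - x)) H_n,
       whose coefficients agree below degree r, so their coefficients agree up to x^r.

   Combining (1)-(3) gives the series of the theorem, summed from n = 1 because A_r(0) = 0. *)

no_notation vec_nth (infixl \<open>$\<close> 90)
unbundle fps_syntax

text \<open>The weights of row k of Pascal's triangle against \<open>2^-(m+1)\<close> sum to 1;
  the induction step uses Pascal's rule to show the limit L satisfies \<open>L = (1 + L) / 2\<close>.\<close>

lemma binomial_half_sums: "(\<lambda>m. real (m choose k) / 2 ^ Suc m) sums 1"
proof (induction k)
  case 0
  have "(\<lambda>m. (1/2) * (1/2::real) ^ m) sums ((1/2) * (1 / (1 - 1/2)))"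
    by (intro sums_mult geometric_sums) simp
  then show ?case by (simp add: power_divide)
next
  case (Suc k)
  define a where "a k m = real (m choose k) / 2 ^ Suc m" for k m
  have a_nonneg: "0 \<le> a k m" for k m by (simp add: a_def)
  have pascal: "a (Suc k) (Suc m) = (a k m + a (Suc k) m) / 2" for m
    by (simp add: a_def field_simps)
  have prev: "a k sums 1" using Suc unfolding a_def .
  have prev_partial: "(\<Sum>m<M. a k m) \<le> 1" for M
    using sum_le_suminf[OF sums_summable[OF prev], of "{..<M}"] a_nonneg sums_unique[OF prev]
    by auto
  have partial_bound: "(\<Sum>m<M. a (Suc k) m) \<le> 1" for M
  proof -
    have "(\<Sum>m<M. a (Suc k) m) \<le> (\<Sum>m<Suc M. a (Suc k) m)"
      by (simp add: a_nonneg)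
    also have "\<dots> = a (Suc k) 0 + (\<Sum>m<M. a (Suc k) (Suc m))"
      by (rule sum.lessThan_Suc_shift)
    also have "\<dots> = ((\<Sum>m<M. a k m) + (\<Sum>m<M. a (Suc k) m)) / 2"
      by (simp add: pascal sum.distrib flip: sum_divide_distrib) (simp add: a_def)
    finally show ?thesis using prev_partial[of M] by simp
  qed
  obtain L where L: "a (Suc k) sums L"
    using summableI_nonneg_bounded[OF a_nonneg partial_bound] by (auto simp: summable_def)
  have "(\<lambda>m. a (Suc k) (Suc m)) sums L"
    using L by (subst sums_Suc_iff) (simp add: a_def)
  moreover have "(\<lambda>m. a (Suc k) (Suc m)) sums ((1 + L) / 2)"
    unfolding pascal by (intro sums_divide sums_add prev L)
  ultimately have "L = (1 + L) / 2" by (rule sums_unique2)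
  then have "L = 1" by simp
  with L show ?case unfolding a_def by simp
qed

lemma euler_transform:
  fixes a :: "nat \<Rightarrow> real"
  assumes abs_summable: "summable (\<lambda>k. \<bar>a k\<bar>)"
  shows "(\<lambda>m. (\<Sum>k\<le>m. real (m choose k) * a k) / 2 ^ Suc m) sums suminf a"
proof -
  define F where "F = (\<lambda>(k, m). real (m choose k) * a k / 2 ^ Suc m)"
  have half: "((\<lambda>m. real (m choose k) / 2 ^ Suc m) has_sum 1) UNIV" for k
    by (rule sums_nonneg_imp_has_sum[OF binomial_half_sums]) simp
  have row: "((\<lambda>m. F (k, m)) has_sum a k) UNIV" for k
    using has_sum_cmult_left[OF half, of k "a k"] by (simp add: F_def)
  have row_abs: "((\<lambda>m. \<bar>F (k, m)\<bar>) has_sum \<bar>a k\<bar>) UNIV" for k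
    using has_sum_cmult_left[OF half, of k "\<bar>a k\<bar>"] by (simp add: F_def abs_mult)
  have "(\<lambda>k. \<bar>a k\<bar>) summable_on UNIV"
    by (rule summable_nonneg_imp_summable_on[OF abs_summable]) simp
  then have "(\<lambda>x. norm (F x)) summable_on UNIV \<times> UNIV"
    using summable_on_SigmaI[where f = "\<lambda>x. \<bar>F x\<bar>" and A = UNIV and B = "\<lambda>_. UNIV", OF row_abs]
    by simp
  then have "F summable_on UNIV \<times> UNIV"
    by (rule abs_summable_summable)
  then obtain S where S: "(F has_sum S) (UNIV \<times> UNIV)"
    unfolding summable_on_def by blast
  have "(a has_sum S) UNIV"
    using has_sum_SigmaD[OF S[unfolded UNIV_Times_UNIV[symmetric]]] row by auto
  then have "suminf a = S"
    using has_sum_imp_sums sums_unique by blast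
  have column: "((\<lambda>k. F (k, m)) has_sum (\<Sum>k\<le>m. real (m choose k) * a k) / 2 ^ Suc m) UNIV" for m
    by (rule has_sum_finite_neutralI[of "{..m}"]) (auto simp: F_def sum_divide_distrib)
  have "((\<lambda>(m, k). F (k, m)) has_sum S) (UNIV \<times> UNIV)"
    using S has_sum_swap by blast
  then have "((\<lambda>m. (\<Sum>k\<le>m. real (m choose k) * a k) / 2 ^ Suc m) has_sum S) UNIV"
    using has_sum_SigmaD[where A = UNIV and B = "\<lambda>_. UNIV" and f = "\<lambda>(m, k). F (k, m)"] column
    by simp
  then show ?thesis
    using \<open>suminf a = S\<close> has_sum_imp_sums by blast
qed

lemma zeta_sums:
  assumes "r \<ge> 2"
  shows "(\<lambda>k. 1 / real (Suc k) ^ r) sums zeta r"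
proof -
  have "summable (\<lambda>n. inverse (real n ^ r))"
    by (rule inverse_power_summable[OF assms])
  then have "summable (\<lambda>k. inverse (real (Suc k) ^ r))"
    by (subst summable_Suc_iff)
  then show ?thesis
    unfolding zeta_def by (simp add: summable_sums field_simps)
qed

text \<open>The alternating zeta function: the terms with even denominator sum to \<open>2^-r zeta(r)\<close>,
  and subtracting them twice from \<open>zeta(r)\<close> leaves \<open>(1 - 2^(1-r)) zeta(r)\<close>.\<close>

lemma alternating_zeta_sums:
  assumes "r \<ge> 2"
  shows "(\<lambda>k. (-1) ^ k / real (Suc k) ^ r) sums ((1 - 2 powr (1 - real r)) * zeta r)"
proof -
  define z where "z k = 1 / real (Suc k) ^ r" for k
  define e where "e k = (if odd k then z k else 0)" for k
  have zeta: "z sums zeta r"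
    unfolding z_def using zeta_sums[OF assms] .
  have odd_terms: "(\<lambda>m. e (2 * m + 1)) = (\<lambda>m. (1 / 2 ^ r) * z m)"
  proof
    fix m
    have "real (Suc (2 * m + 1)) = 2 * real (Suc m)" by simp
    then show "e (2 * m + 1) = (1 / 2 ^ r) * z m"
      unfolding e_def z_def by (simp only: power_mult_distrib) simp
  qed
  have "(\<lambda>m. e (2 * m + 1)) sums ((1 / 2 ^ r) * zeta r)"
    unfolding odd_terms by (rule sums_mult[OF zeta])
  moreover have "strict_mono (\<lambda>m::nat. 2 * m + 1)"
    by (auto simp: strict_mono_def)
  moreover have "e n = 0" if "n \<notin> range (\<lambda>m::nat. 2 * m + 1)" for n
    using that by (auto simp: e_def elim!: oddE)
  ultimately have even_part: "e sums ((1 / 2 ^ r) * zeta r)"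
    using sums_mono_reindex by blast
  have "(\<lambda>k. (-1) ^ k / real (Suc k) ^ r) = (\<lambda>k. z k - 2 * e k)"
    by (auto simp: e_def z_def)
  moreover have "(\<lambda>k. z k - 2 * e k) sums (zeta r - 2 * ((1 / 2 ^ r) * zeta r))"
    by (intro sums_diff zeta sums_mult even_part)
  moreover have "2 powr (1 - real r) = 2 / 2 ^ r"
    by (simp add: powr_diff powr_realpow)
  ultimately show ?thesis
    by (simp add: algebra_simps)
qed

definition alt_binom :: "nat \<Rightarrow> nat \<Rightarrow> real" where
  "alt_binom N n = (\<Sum>j<n. (-1) ^ j * real (n choose Suc j) / real (Suc j) ^ N)"

lemma alt_binom_series:
  assumes "r \<ge> 2"
  shows "(\<lambda>m. alt_binom r m / 2 ^ Suc m) sums ((1 - 2 powr (1 - real r)) * zeta r)"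
proof -
  define a where "a k = (if k = 0 then 0 else (-1) ^ (k - 1) / real k ^ r)" for k
  have shifted: "a (Suc k) = (-1) ^ k / real (Suc k) ^ r" for k
    by (simp add: a_def)
  have "summable (\<lambda>k. \<bar>a (Suc k)\<bar>)"
    using sums_summable[OF zeta_sums[OF assms]] by (simp add: shifted abs_mult)
  then have abs_summable: "summable (\<lambda>k. \<bar>a k\<bar>)"
    by (subst (asm) summable_Suc_iff)
  have "(\<lambda>k. a (Suc k)) sums ((1 - 2 powr (1 - real r)) * zeta r)"
    using alternating_zeta_sums[OF assms] by (simp only: shifted)
  then have "a sums ((1 - 2 powr (1 - real r)) * zeta r + a 0)"
    by (rule sums_Suc_iff[THEN iffD1])
  then have sum_a: "suminf a = (1 - 2 powr (1 - real r)) * zeta r"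
    by (simp add: a_def sums_iff)
  have transform: "(\<Sum>k\<le>m. real (m choose k) * a k) = alt_binom r m" for m
  proof (cases m)
    case (Suc m')
    have "(\<Sum>k\<le>Suc m'. real (Suc m' choose k) * a k)
        = (\<Sum>j\<le>m'. real (Suc m' choose Suc j) * a (Suc j))"
      by (subst sum.atMost_Suc_shift) (simp add: a_def)
    then show ?thesis
      unfolding Suc alt_binom_def lessThan_Suc_atMost
      by (simp add: shifted mult.commute del: binomial_Suc_Suc)
  qed (simp add: a_def alt_binom_def)
  show ?thesis
    using euler_transform[OF abs_summable] by (simp add: transform sum_a)
qed

definition geom_fps :: "nat \<Rightarrow> real fps" where
  "geom_fps k = Abs_fps (\<lambda>i. (1 / real k) ^ i)"

definition harm_fps :: "nat \<Rightarrow> real fps" where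
  "harm_fps n = (\<Prod>k\<in>{1..n}. geom_fps k)"

lemma fps_prod_nth_0: "finite A \<Longrightarrow> prod f A $ 0 = (\<Prod>j\<in>A. f j $ 0)"
  by (induction A rule: finite_induct) auto

lemma harm_fps_nth_0: "harm_fps n $ 0 = 1"
  by (simp add: harm_fps_def fps_prod_nth_0 geom_fps_def)

lemma geom_fps_eq: "geom_fps k = 1 + fps_const (1 / real k) * (fps_X * geom_fps k)"
proof (rule fps_ext)
  fix i show "geom_fps k $ i = (1 + fps_const (1 / real k) * (fps_X * geom_fps k)) $ i"
    by (cases i) (simp_all add: geom_fps_def)
qed

lemma harm_fps_Suc_nth:
  "harm_fps (Suc n) $ Suc N = harm_fps n $ Suc N + harm_fps (Suc n) $ N / real (Suc n)"
proof -
  have split: "harm_fps (Suc n) = harm_fps n * geom_fps (Suc n)"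
    unfolding harm_fps_def by (simp add: atLeastAtMostSuc_conv)
  also have "\<dots> = harm_fps n * (1 + fps_const (1 / real (Suc n)) * (fps_X * geom_fps (Suc n)))"
    by (subst geom_fps_eq) (rule refl)
  also have "\<dots> = harm_fps n + fps_const (1 / real (Suc n)) * (fps_X * harm_fps (Suc n))"
    unfolding split by (simp add: algebra_simps)
  finally have "harm_fps (Suc n) $ Suc N
      = (harm_fps n + fps_const (1 / real (Suc n)) * (fps_X * harm_fps (Suc n))) $ Suc N"
    by (rule arg_cong)
  then show ?thesis by simp
qed

lemma alt_binom_0: "alt_binom 0 (Suc n) = 1"
proof -
  have "(\<Sum>i\<le>Suc n. (-1) ^ i * real (Suc n choose i)) = 0"
    by (rule choose_alternating_sum) simp
  also have "(\<Sum>i\<le>Suc n. (-1) ^ i * real (Suc n choose i))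
      = 1 - (\<Sum>j\<le>n. (-1) ^ j * real (Suc n choose Suc j))"
    by (subst sum.atMost_Suc_shift) (simp add: sum_negf del: binomial_Suc_Suc)
  finally show ?thesis
    by (simp add: alt_binom_def lessThan_Suc_atMost del: binomial_Suc_Suc)
qed

text \<open>Absorption \<open>(n+1) C(n,j) = (j+1) C(n+1,j+1)\<close> turns Pascal's rule into the recursion.\<close>

lemma alt_binom_Suc:
  "alt_binom (Suc N) (Suc n) = alt_binom (Suc N) n + alt_binom N (Suc n) / real (Suc n)"
proof -
  have absorb: "(-1) ^ j * real (n choose j) / real (Suc j) ^ Suc N
      = (-1) ^ j * real (Suc n choose Suc j) / real (Suc j) ^ N / real (Suc n)" for j
  proof -
    have "real (Suc n) * real (n choose j) = real (Suc n choose Suc j) * real (Suc j)"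
      using Suc_times_binomial_eq[of n j] by (metis of_nat_mult)
    then have "real (Suc n choose Suc j) = real (Suc n) * real (n choose j) / real (Suc j)"
      by (simp add: field_simps del: binomial_Suc_Suc of_nat_Suc)
    then show ?thesis
      by (simp only:) (simp add: field_simps del: binomial_Suc_Suc of_nat_Suc)
  qed
  have "alt_binom (Suc N) (Suc n)
      = (\<Sum>j<Suc n. (-1) ^ j * real (n choose Suc j) / real (Suc j) ^ Suc N)
      + (\<Sum>j<Suc n. (-1) ^ j * real (n choose j) / real (Suc j) ^ Suc N)"
    unfolding alt_binom_def
    by (simp add: sum.distrib[symmetric] add_divide_distrib algebra_simps del: sum.lessThan_Suc)
  also have "(\<Sum>j<Suc n. (-1) ^ j * real (n choose Suc j) / real (Suc j) ^ Suc N)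
      = alt_binom (Suc N) n"
    by (simp add: alt_binom_def)
  also have "(\<Sum>j<Suc n. (-1) ^ j * real (n choose j) / real (Suc j) ^ Suc N)
      = alt_binom N (Suc n) / real (Suc n)"
    unfolding alt_binom_def sum_divide_distrib by (intro sum.cong refl absorb)
  finally show ?thesis .
qed

lemma harm_fps_nth: "harm_fps n $ Suc N = alt_binom (Suc N) n"
proof (induction n arbitrary: N)
  case 0
  then show ?case by (simp add: harm_fps_def alt_binom_def)
next
  case (Suc n)
  then show ?case
    by (induction N) (simp_all add: harm_fps_Suc_nth alt_binom_Suc harm_fps_nth_0 alt_binom_0)
qed

definition fps_sparse :: "(nat \<Rightarrow> 'a::zero) \<Rightarrow> nat \<Rightarrow> 'a fps" where
  "fps_sparse c j = Abs_fps (\<lambda>N. if j dvd N then c (N div j) else 0)"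

definition weighted_tuples :: "nat \<Rightarrow> nat \<Rightarrow> nat \<Rightarrow> (nat \<Rightarrow> nat) set" where
  "weighted_tuples m B N = {k \<in> {1..m} \<rightarrow>\<^sub>E {0..B}. (\<Sum>j=1..m. j * k j) = N}"

lemma finite_weighted_tuples: "finite (weighted_tuples m B N)"
  unfolding weighted_tuples_def
  by (rule finite_subset[OF _ finite_PiE[of "{1..m}" "\<lambda>_. {0..B}"]]) auto

lemma fps_sparse_convolution:
  fixes c :: "nat \<Rightarrow> 'a::comm_semiring_1"
  assumes "j > 0"
  shows "(\<Sum>i=0..N. fps_sparse c j $ i * g (N - i)) = (\<Sum>t\<in>{t\<in>{..N}. j * t \<le> N}. c t * g (N - j * t))"
proof -
  have "(\<Sum>i=0..N. fps_sparse c j $ i * g (N - i)) = (\<Sum>i\<in>{i\<in>{0..N}. j dvd i}. c (i div j) * g (N - i))"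
    by (subst sum.inter_filter) (auto simp: fps_sparse_def intro!: sum.cong)
  also have "\<dots> = (\<Sum>t\<in>{t\<in>{..N}. j * t \<le> N}. c t * g (N - j * t))"
  proof (rule sum.reindex_bij_witness[where i = "\<lambda>t. j * t" and j = "\<lambda>i. i div j"])
    fix i assume i: "i \<in> {i\<in>{0..N}. j dvd i}"
    then obtain t where t: "i = j * t" by (auto elim!: dvdE)
    moreover have "t \<le> N"
      using i t le_trans[of t "j * t" N] assms by (cases j) auto
    ultimately show "j * (i div j) = i" "i div j \<in> {t\<in>{..N}. j * t \<le> N}"
      using assms i by auto
  qed (use assms in \<open>auto simp: dvd_imp_le\<close>)
  finally show ?thesis .
qed

lemma weighted_tuples_Suc_bij:
  assumes "N \<le> B"
  shows "bij_betw (\<lambda>k. (k (Suc m), k(Suc m := undefined))) (weighted_tuples (Suc m) B N)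
           (SIGMA t:{t\<in>{..N}. Suc m * t \<le> N}. weighted_tuples m B (N - Suc m * t))"
proof (rule bij_betwI[where g = "\<lambda>(t, k). k(Suc m := t)"])
  have weight_upd: "(\<Sum>j=1..m. j * (k(Suc m := t)) j) = (\<Sum>j=1..m. j * k j)" for k :: "nat \<Rightarrow> nat" and t
    by (intro sum.cong) auto
  show "(\<lambda>k. (k (Suc m), k(Suc m := undefined))) \<in> weighted_tuples (Suc m) B N
      \<rightarrow> (SIGMA t:{t\<in>{..N}. Suc m * t \<le> N}. weighted_tuples m B (N - Suc m * t))"
  proof
    fix k assume k: "k \<in> weighted_tuples (Suc m) B N"
    then have weight: "(\<Sum>j=1..m. j * k j) + Suc m * k (Suc m) = N"
      by (simp add: weighted_tuples_def)
    then have "k (Suc m) \<le> N"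
      using le_trans[of "k (Suc m)" "Suc m * k (Suc m)" N] by simp
    with k weight weight_upd show "(k (Suc m), k(Suc m := undefined))
        \<in> (SIGMA t:{t\<in>{..N}. Suc m * t \<le> N}. weighted_tuples m B (N - Suc m * t))"
      by (auto simp: weighted_tuples_def PiE_def extensional_def Pi_def)
  qed
  show "(\<lambda>(t, k). k(Suc m := t)) \<in> (SIGMA t:{t\<in>{..N}. Suc m * t \<le> N}. weighted_tuples m B (N - Suc m * t))
      \<rightarrow> weighted_tuples (Suc m) B N"
  proof
    fix p assume "p \<in> (SIGMA t:{t\<in>{..N}. Suc m * t \<le> N}. weighted_tuples m B (N - Suc m * t))"
    then obtain t k where p: "p = (t, k)" and t: "t \<le> N" "Suc m * t \<le> N"
      and k: "k \<in> weighted_tuples m B (N - Suc m * t)"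
      by auto
    have "(\<Sum>j=1..Suc m. j * (k(Suc m := t)) j) = N"
      using t k weight_upd by (simp add: weighted_tuples_def)
    with t k assms show "(\<lambda>(t, k). k(Suc m := t)) p \<in> weighted_tuples (Suc m) B N"
      unfolding p by (auto simp: weighted_tuples_def PiE_def extensional_def Pi_def)
  qed
  show "(\<lambda>(t, k). k(Suc m := t)) ((\<lambda>k. (k (Suc m), k(Suc m := undefined))) k) = k" for k
    by simp
  show "(\<lambda>k. (k (Suc m), k(Suc m := undefined))) ((\<lambda>(t, k). k(Suc m := t)) p) = p"
    if "p \<in> (SIGMA t:{t\<in>{..N}. Suc m * t \<le> N}. weighted_tuples m B (N - Suc m * t))" for p
    using that by (auto simp: weighted_tuples_def PiE_def extensional_def)
qed

lemma fps_sparse_prod_nth: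
  fixes c :: "nat \<Rightarrow> nat \<Rightarrow> 'a::comm_semiring_1"
  assumes "N \<le> B"
  shows "(\<Prod>j\<in>{1..m}. fps_sparse (c j) j) $ N = (\<Sum>k\<in>weighted_tuples m B N. \<Prod>j=1..m. c j (k j))"
  using assms
proof (induction m arbitrary: N)
  case 0
  then show ?case by (auto simp: weighted_tuples_def)
next
  case (Suc m)
  define T where "T = {t\<in>{..N}. Suc m * t \<le> N}"
  let ?P = "\<Prod>j\<in>{1..m}. fps_sparse (c j) j"
  have "(\<Prod>j\<in>{1..Suc m}. fps_sparse (c j) j) $ N = (fps_sparse (c (Suc m)) (Suc m) * ?P) $ N"
    by (simp add: atLeastAtMostSuc_conv)
  also have "\<dots> = (\<Sum>t\<in>T. c (Suc m) t * ?P $ (N - Suc m * t))"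
    unfolding fps_mult_nth T_def by (rule fps_sparse_convolution) simp
  also have "\<dots> = (\<Sum>t\<in>T. \<Sum>k\<in>weighted_tuples m B (N - Suc m * t). c (Suc m) t * (\<Prod>j=1..m. c j (k j)))"
    using Suc by (simp add: sum_distrib_left)
  also have "\<dots> = (\<Sum>(t, k)\<in>(SIGMA t:T. weighted_tuples m B (N - Suc m * t)). c (Suc m) t * (\<Prod>j=1..m. c j (k j)))"
    by (rule sum.Sigma) (auto simp: T_def finite_weighted_tuples)
  also have "\<dots> = (\<Sum>k\<in>weighted_tuples (Suc m) B N.
      (\<lambda>(t, k). c (Suc m) t * (\<Prod>j=1..m. c j (k j))) (k (Suc m), k(Suc m := undefined)))"
    unfolding T_def
    by (rule sum.reindex_bij_betw[OF weighted_tuples_Suc_bij[OF Suc.prems], symmetric,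
          where g = "\<lambda>(t, k). c (Suc m) t * (\<Prod>j=1..m. c j (k j))"])
  also have "\<dots> = (\<Sum>k\<in>weighted_tuples (Suc m) B N. \<Prod>j=1..Suc m. c j (k j))"
  proof (rule sum.cong[OF refl])
    fix k :: "nat \<Rightarrow> nat"
    have "(\<Prod>j=1..m. c j ((k(Suc m := undefined)) j)) = (\<Prod>j=1..m. c j (k j))"
      by (intro prod.cong) auto
    then show "(\<lambda>(t, k). c (Suc m) t * (\<Prod>j=1..m. c j (k j))) (k (Suc m), k(Suc m := undefined))
        = (\<Prod>j=1..Suc m. c j (k j))"
      by (simp add: mult.commute)
  qed
  finally show ?case .
qed

definition fps_exp_monomial :: "'a::field_char_0 \<Rightarrow> nat \<Rightarrow> 'a fps" where
  "fps_exp_monomial a j = fps_sparse (\<lambda>t. a ^ t / fact t) j"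

lemma bellY_fps_coeff:
  "bellY r x = fact r * (\<Prod>j\<in>{1..r}. fps_exp_monomial (x j / fact j) j) $ r"
proof -
  have "bellY r x = (\<Sum>k\<in>weighted_tuples r r r. fact r * (\<Prod>j=1..r. (x j / fact j) ^ k j / fact (k j)))"
    unfolding bellY_def weighted_tuples_def
    by (intro sum.cong refl) (simp add: prod_dividef)
  also have "\<dots> = fact r * (\<Prod>j\<in>{1..r}. fps_exp_monomial (x j / fact j) j) $ r"
    unfolding fps_exp_monomial_def
    by (subst fps_sparse_prod_nth[OF order_refl]) (simp add: sum_distrib_left)
  finally show ?thesis .
qed

lemma fps_exp_monomial_deriv:
  fixes a :: "'a::field_char_0"
  assumes "j > 0"
  shows "fps_deriv (fps_exp_monomial a j) = (fps_const (a * of_nat j) * fps_X ^ (j - 1)) * fps_exp_monomial a j"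
proof (rule fps_ext)
  fix N
  let ?E = "fps_exp_monomial a j"
  have rhs: "((fps_const (a * of_nat j) * fps_X ^ (j - 1)) * ?E) $ N
      = (if N < j - 1 then 0 else a * of_nat j * ?E $ (N - (j - 1)))"
    by (simp add: mult.assoc fps_X_power_mult_nth)
  show "fps_deriv ?E $ N = ((fps_const (a * of_nat j) * fps_X ^ (j - 1)) * ?E) $ N"
  proof (cases "j dvd Suc N")
    case True
    then obtain s where s: "Suc N = j * Suc s"
      using assms by (metis dvdE mult_0_right nat.distinct(1) not0_implies_Suc)
    then have "Suc N = j + j * s" by simp
    with assms have shift: "N - (j - 1) = j * s" "\<not> N < j - 1"
      by arith+
    have "fps_deriv ?E $ N = of_nat (j * Suc s) * (a ^ Suc s / fact (Suc s))"
      using assms by (simp add: fps_exp_monomial_def fps_sparse_def s)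
    also have "\<dots> = a * of_nat j * (a ^ s / fact s)"
      using of_nat_neq_0[of s, where 'a = 'a]
      by (simp only: fact_Suc of_nat_mult power_Suc) (simp add: field_simps del: of_nat_Suc)
    also have "\<dots> = a * of_nat j * ?E $ (N - (j - 1))"
      unfolding shift(1) using assms by (simp add: fps_exp_monomial_def fps_sparse_def)
    also have "\<dots> = ((fps_const (a * of_nat j) * fps_X ^ (j - 1)) * ?E) $ N"
      unfolding rhs using shift(2) by (rule if_not_P[symmetric])
    finally show ?thesis .
  next
    case False
    have "\<not> j dvd (N - (j - 1))" if "\<not> N < j - 1"
    proof
      assume "j dvd N - (j - 1)"
      then have "j dvd (N - (j - 1)) + j" by simp
      with that assms False show False by simp
    qed
    then show ?thesis
      using False unfolding rhs by (simp add: fps_exp_monomial_def fps_sparse_def)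
  qed
qed

lemma fps_deriv_prod_log:
  fixes f :: "'i \<Rightarrow> 'a::comm_ring_1 fps"
  assumes "finite A" "\<And>j. j \<in> A \<Longrightarrow> fps_deriv (f j) = D j * f j"
  shows "fps_deriv (prod f A) = sum D A * prod f A"
  using assms by (induction A rule: finite_induct) (simp_all add: algebra_simps)

lemma fps_ode_coeffs_eq:
  fixes F G P Q :: "'a::{idom, ring_char_0} fps"
  assumes "fps_deriv F = P * F" "fps_deriv G = Q * G" "F $ 0 = G $ 0"
    and "\<And>i. i < r \<Longrightarrow> P $ i = Q $ i"
  shows "N \<le> r \<Longrightarrow> F $ N = G $ N"
proof (induction N rule: less_induct)
  case (less N)
  show ?case
  proof (cases N)
    case 0
    then show ?thesis using assms(3) by simp
  next
    case (Suc M)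
    have "of_nat (Suc M) * F $ Suc M = (\<Sum>i=0..M. P $ i * F $ (M - i))"
      using fps_deriv_nth[of F M] by (simp add: assms(1) fps_mult_nth)
    also have "\<dots> = (\<Sum>i=0..M. Q $ i * G $ (M - i))"
      using Suc less by (intro sum.cong refl arg_cong2[where f = "(*)"] assms(4) less.IH) auto
    also have "\<dots> = of_nat (Suc M) * G $ Suc M"
      using fps_deriv_nth[of G M] by (simp add: assms(2) fps_mult_nth)
    finally show ?thesis
      using Suc by (simp del: of_nat_Suc)
  qed
qed

lemma harm_fps_deriv:
  "fps_deriv (harm_fps n) = (\<Sum>k\<in>{1..n}. fps_const (1 / real k) * geom_fps k) * harm_fps n"
proof -
  have "fps_deriv (geom_fps k) = (fps_const (1 / real k) * geom_fps k) * geom_fps k" for k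
  proof (rule fps_ext)
    fix N
    have "((fps_const (1 / real k) * geom_fps k) * geom_fps k) $ N
        = (1 / real k) * (\<Sum>i=0..N. (1 / real k) ^ i * (1 / real k) ^ (N - i))"
      by (simp only: mult.assoc fps_mult_left_const_nth) (simp add: fps_mult_nth geom_fps_def)
    also have "\<dots> = fps_deriv (geom_fps k) $ N"
      by (simp add: geom_fps_def flip: power_add)
    finally show "fps_deriv (geom_fps k) $ N = ((fps_const (1 / real k) * geom_fps k) * geom_fps k) $ N"
      by simp
  qed
  then show ?thesis
    unfolding harm_fps_def by (intro fps_deriv_prod_log) auto
qed

text \<open>Second half of step (3): the coefficient of \<open>x^i\<close> in both logarithmic derivatives is
  \<open>H_n^(i+1)\<close> for \<open>i < r\<close>, hence the two series agree up to degree r.\<close>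

lemma harm_fps_via_exp:
  assumes "N \<le> r"
  shows "(\<Prod>j\<in>{1..r}. fps_exp_monomial (harm j n / real j) j) $ N = harm_fps n $ N"
proof (rule fps_ode_coeffs_eq[OF _ harm_fps_deriv _ _ assms])
  have "fps_deriv (\<Prod>j\<in>{1..r}. fps_exp_monomial (harm j n / real j) j)
      = (\<Sum>j\<in>{1..r}. fps_const (harm j n / real j * real j) * fps_X ^ (j - 1))
        * (\<Prod>j\<in>{1..r}. fps_exp_monomial (harm j n / real j) j)"
    by (intro fps_deriv_prod_log) (auto simp: fps_exp_monomial_deriv)
  also have "(\<Sum>j\<in>{1..r}. fps_const (harm j n / real j * real j) * fps_X ^ (j - 1))
      = (\<Sum>j\<in>{1..r}. fps_const (harm j n) * fps_X ^ (j - 1))"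
    by (intro sum.cong) auto
  finally show "fps_deriv (\<Prod>j\<in>{1..r}. fps_exp_monomial (harm j n / real j) j)
      = (\<Sum>j\<in>{1..r}. fps_const (harm j n) * fps_X ^ (j - 1))
        * (\<Prod>j\<in>{1..r}. fps_exp_monomial (harm j n / real j) j)" .
  show "(\<Prod>j\<in>{1..r}. fps_exp_monomial (harm j n / real j) j) $ 0 = harm_fps n $ 0"
    by (simp add: fps_prod_nth_0 harm_fps_nth_0 fps_exp_monomial_def fps_sparse_def)
  fix i assume "i < r"
  have "(\<Sum>j\<in>{1..r}. fps_const (harm j n) * fps_X ^ (j - 1)) $ i = (\<Sum>j\<in>{1..r}. if j = Suc i then harm j n else 0)"
    unfolding fps_sum_nth by (intro sum.cong refl) auto
  also have "\<dots> = harm (Suc i) n"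
    using \<open>i < r\<close> by (simp add: sum.delta')
  also have "\<dots> = (\<Sum>k\<in>{1..n}. fps_const (1 / real k) * geom_fps k) $ i"
    by (simp add: fps_sum_nth geom_fps_def harm_def power_one_over)
  finally show "(\<Sum>j\<in>{1..r}. fps_const (harm j n) * fps_X ^ (j - 1)) $ i
      = (\<Sum>k\<in>{1..n}. fps_const (1 / real k) * geom_fps k) $ i" .
qed

lemma bellY_harm:
  "bellY r (\<lambda>j. fact (j - 1) * harm j n) = fact r * harm_fps n $ r"
proof -
  have "fact (j - 1) * harm j n / fact j = harm j n / real j" if "j \<in> {1..r}" for j
    using that by (cases j) (auto simp: field_simps simp del: of_nat_Suc)
  then have "(\<Prod>j\<in>{1..r}. fps_exp_monomial (fact (j - 1) * harm j n / fact j) j)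
      = (\<Prod>j\<in>{1..r}. fps_exp_monomial (harm j n / real j) j)"
    by (intro prod.cong) simp_all
  then show ?thesis
    by (simp only: bellY_fps_coeff harm_fps_via_exp[OF order_refl])
qed

theorem mainTheorem10:
  fixes r :: nat
  assumes "r \<ge> 2"
  shows "summable (\<lambda>n. 1 / 2 ^ (Suc n + 1) *
                     bellY r (\<lambda>j. fact (j - 1) * harm j (Suc n)))
       \<and> zeta r = 1 / ((1 - 2 powr (1 - real r)) * fact r) *
           (\<Sum>n. 1 / 2 ^ (Suc n + 1) * bellY r (\<lambda>j. fact (j - 1) * harm j (Suc n)))"
proof -
  define eta where "eta = (1 - 2 powr (1 - real r)) * zeta r"
  obtain r' where r': "r = Suc r'"
    using assms by (cases r) auto
  have term_eq: "1 / 2 ^ (Suc n + 1) * bellY r (\<lambda>j. fact (j - 1) * harm j (Suc n))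
      = fact r * (alt_binom r (Suc n) / 2 ^ Suc (Suc n))" for n
    unfolding bellY_harm r' using harm_fps_nth[of "Suc n" r'] by simp
  have "(\<lambda>n. alt_binom r (Suc n) / 2 ^ Suc (Suc n)) sums eta"
    using alt_binom_series[OF assms] unfolding eta_def
    by (subst sums_Suc_iff) (simp add: alt_binom_def)
  then have series: "(\<lambda>n. 1 / 2 ^ (Suc n + 1) * bellY r (\<lambda>j. fact (j - 1) * harm j (Suc n)))
      sums (fact r * eta)"
    unfolding term_eq by (rule sums_mult)
  have "2 powr (1 - real r) < 1"
    using assms by (intro powr_less_one) auto
  then have nonzero: "(1 - 2 powr (1 - real r)) * fact r \<noteq> 0"
    by auto
  have "fact r * eta = (1 - 2 powr (1 - real r)) * fact r * zeta r"
    by (simp add: eta_def ac_simps)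
  with nonzero have "zeta r = 1 / ((1 - 2 powr (1 - real r)) * fact r) * (fact r * eta)"
    by simp
  with series show ?thesis
    by (simp add: sums_summable sums_unique[symmetric])
qed

end
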